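(* Let $\Phi$ be an $N\times\mathcal{C}$ complex matrix ($\mathcal{C}\ge 2$) with no repeated columns which is $\eta$-StRIP-able for some $\eta\in(0,1]$, with columns $\varphi_1,\dots,\varphi_{\mathcal{C}}$. Let $1\le k\le\mathcal{C}$ and fix complex numbers $\alpha_1,\dots,\alpha_k$. Let $\pi=(\pi_1,\dots,\pi_{\mathcal{C}})$ be a uniformly random permutation of $\{1,\dots,\mathcal{C}\}$, let $\alpha\in\mathbb{C}^{\mathcal{C}}$ be the vector with entry $\alpha_j$ at position $\pi_j$ for $j=1,\dots,k$ and zero elsewhere, and let $f:=N^{-1/2}\Phi\alpha=N^{-1/2}\sum_{j=1}^k\alpha_j\varphi_{\pi_j}$. Then $$\left(1-\frac{k-1}{\mathcal{C}-1}\right)\|\alpha\|^2\leq\mathbb{E}_\pi\left[\|f\|^2\right]\leq\left(1+\frac{1}{\mathcal{C}-1}\right)\|\alpha\|^2,$$ where $\mathbb{E}_\pi$ denotes expectation over $\pi$ only.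
   Context: Columns of $\Phi$ have entries $\varphi_j(x)$, $x=1,\dots,N$. For $0<\eta\le 1$, $\Phi$ is called $\eta$-StRIP-able if: (St1) $\sum_{j=1}^{\mathcal{C}}\varphi_j(x)\overline{\varphi_j(y)}=0$ for $x\neq y$, and $\sum_{j=1}^{\mathcal{C}}\varphi_j(x)=0$ for all $x$; (St2) the columns form a group under pointwise multiplication, whose identity is the all-ones column $\varphi_1$; (St3) for all $j\in\{2,\dots,\mathcal{C}\}$, $\left|\sum_x\varphi_j(x)\right|^2\leq N^{2-\eta}$. $\|\cdot\|$ is the Euclidean norm. *)

theory Defs
  imports "HOL-Combinatorics.Permutations" Complex_Main
begin

text \<open>An N x C complex matrix is represented as Phi :: nat => nat => complex, with
  entry Phi x j = phi_j(x) for row x in {1..N} and column j in {1..C}.\<close>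

definition StRIP_able :: "nat \<Rightarrow> nat \<Rightarrow> (nat \<Rightarrow> nat \<Rightarrow> complex) \<Rightarrow> real \<Rightarrow> bool" where
  "StRIP_able N C Phi \<eta> \<longleftrightarrow>
     0 < \<eta> \<and> \<eta> \<le> 1 \<and>
     \<comment> \<open>St1\<close>
     (\<forall>x\<in>{1..N}. \<forall>y\<in>{1..N}. x \<noteq> y \<longrightarrow> (\<Sum>j=1..C. Phi x j * cnj (Phi y j)) = 0) \<and>
     (\<forall>x\<in>{1..N}. (\<Sum>j=1..C. Phi x j) = 0) \<and>
     \<comment> \<open>St2: columns form a group under pointwise multiplication with identity the all-ones column phi_1\<close>
     1 \<le> C \<and>
     (\<forall>x\<in>{1..N}. Phi x 1 = 1) \<and>
     (\<forall>i\<in>{1..C}. \<forall>j\<in>{1..C}. \<exists>l\<in>{1..C}. \<forall>x\<in>{1..N}. Phi x l = Phi x i * Phi x j) \<and>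
     (\<forall>i\<in>{1..C}. \<exists>l\<in>{1..C}. \<forall>x\<in>{1..N}. Phi x i * Phi x l = 1) \<and>
     \<comment> \<open>St3\<close>
     (\<forall>j\<in>{2..C}. (cmod (\<Sum>x=1..N. Phi x j))\<^sup>2 \<le> real N powr (2 - \<eta>))"

definition no_repeated_columns :: "nat \<Rightarrow> nat \<Rightarrow> (nat \<Rightarrow> nat \<Rightarrow> complex) \<Rightarrow> bool" where
  "no_repeated_columns N C Phi \<longleftrightarrow>
     (\<forall>i\<in>{1..C}. \<forall>j\<in>{1..C}. i \<noteq> j \<longrightarrow> (\<exists>x\<in>{1..N}. Phi x i \<noteq> Phi x j))"

definition alpha_vec :: "nat \<Rightarrow> (nat \<Rightarrow> complex) \<Rightarrow> (nat \<Rightarrow> nat) \<Rightarrow> nat \<Rightarrow> complex" where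
  "alpha_vec k a \<pi> i = (if \<exists>j\<in>{1..k}. \<pi> j = i then a (THE j. j \<in> {1..k} \<and> \<pi> j = i) else 0)"

definition f_vec :: "nat \<Rightarrow> nat \<Rightarrow> (nat \<Rightarrow> nat \<Rightarrow> complex) \<Rightarrow> nat \<Rightarrow> (nat \<Rightarrow> complex) \<Rightarrow> (nat \<Rightarrow> nat) \<Rightarrow> nat \<Rightarrow> complex" where
  "f_vec N C Phi k a \<pi> x = complex_of_real (1 / sqrt (real N)) * (\<Sum>i=1..C. Phi x i * alpha_vec k a \<pi> i)"

definition sqnorm :: "nat \<Rightarrow> (nat \<Rightarrow> complex) \<Rightarrow> real" where
  "sqnorm n v = (\<Sum>i=1..n. (cmod (v i))\<^sup>2)"

definition E_perm :: "nat \<Rightarrow> ((nat \<Rightarrow> nat) \<Rightarrow> real) \<Rightarrow> real" where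
  "E_perm C g = (\<Sum>\<pi>\<in>{\<pi>. \<pi> permutes {1..C}}. g \<pi>) / real (card {\<pi>. \<pi> permutes {1..C}})"

end

theory Submission
  imports Defs "HOL-Analysis.Convex"
begin

text \<open>Every entry of a StRIP-able matrix is unimodular, because the entries of a row form a finite
  multiplicative group. Hence every column has squared norm N, and since the columns sum to zero in
  every row, the inner products of distinct columns add up to -CN. Averaging over a uniformly random
  permutation, each ordered pair of distinct positions is sent to each ordered pair of distinct
  columns equally often, so the expected inner product of two distinct selected columns is
  -N/(C-1). Expanding the norm of f gives
  E ||f||^2 = (1 + 1/(C-1)) ||alpha||^2 - |alpha_1 + ... + alpha_k|^2 / (C-1),
  and both bounds follow from 0 <= |alpha_1 + ... + alpha_k|^2 <= k ||alpha||^2.\<close>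

lemma norm_eq_1_if_mult_closed:
  fixes S :: "'a::real_normed_div_algebra set"
  assumes "finite S"
    and mult_closed: "\<And>u v. u \<in> S \<Longrightarrow> v \<in> S \<Longrightarrow> u * v \<in> S"
    and inverse_closed: "\<And>u. u \<in> S \<Longrightarrow> \<exists>v\<in>S. u * v = 1"
    and "z \<in> S"
  shows "norm z = 1"
proof -
  define M where "M = Max (norm ` S)"
  have le_M: "norm u \<le> M" if "u \<in> S" for u
    unfolding M_def using assms(1) that by simp
  have "M \<in> norm ` S"
    unfolding M_def using assms(1,4) by (intro Max_in) auto
  then obtain u where "u \<in> S" "norm u = M"
    by blast
  \<comment> \<open>the square of a norm-maximiser lies in S again\<close>
  then have "M * M \<le> M" "0 \<le> M"
    using le_M[OF mult_closed[of u u]] by (auto simp: norm_mult)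
  then have "M \<le> 1"
    using mult_le_cancel_left2[of M M] by linarith
  obtain v where "v \<in> S" "z * v = 1"
    using inverse_closed assms(4) by blast
  then have "norm z * norm v = 1"
    by (metis norm_mult norm_one)
  moreover have "norm z \<le> 1" "norm v \<le> 1"
    using le_M \<open>M \<le> 1\<close> \<open>v \<in> S\<close> assms(4) by fastforce+
  ultimately show ?thesis
    using mult_left_le[of "norm v" "norm z"] by simp
qed

lemma StRIP_able_norm_entry:
  assumes "StRIP_able N C Phi \<eta>" "x \<in> {1..N}" "i \<in> {1..C}"
  shows "cmod (Phi x i) = 1"
proof (rule norm_eq_1_if_mult_closed[where S = "(\<lambda>j. Phi x j) ` {1..C}"])
  show "\<And>u v. u \<in> (\<lambda>j. Phi x j) ` {1..C} \<Longrightarrow> v \<in> (\<lambda>j. Phi x j) ` {1..C} \<Longrightarrow>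
      u * v \<in> (\<lambda>j. Phi x j) ` {1..C}"
    using assms(1,2) unfolding StRIP_able_def by (smt (verit) imageE image_eqI)
  show "\<And>u. u \<in> (\<lambda>j. Phi x j) ` {1..C} \<Longrightarrow> \<exists>v\<in>(\<lambda>j. Phi x j) ` {1..C}. u * v = 1"
    using assms(1,2) unfolding StRIP_able_def by blast
qed (use assms(3) in auto)

definition off_diagonal :: "'a set \<Rightarrow> ('a \<times> 'a) set" where
  "off_diagonal A = {(i, m). i \<in> A \<and> m \<in> A \<and> i \<noteq> m}"

lemma card_off_diagonal:
  assumes "finite A"
  shows "card (off_diagonal A) = card A * (card A - 1)"
proof -
  have "off_diagonal A = A \<times> A - (\<lambda>i. (i, i)) ` A"
    unfolding off_diagonal_def by auto
  moreover have "card ((\<lambda>i. (i, i)) ` A) = card A"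
    by (rule card_image) (auto simp: inj_on_def)
  ultimately show ?thesis
    using assms by (simp add: card_Diff_subset card_cartesian_product image_subset_iff diff_mult_distrib2)
qed

lemma sum_off_diagonal:
  fixes g :: "'a \<Rightarrow> 'a \<Rightarrow> 'b::ab_group_add"
  assumes "finite A"
  shows "(\<Sum>(i, m)\<in>off_diagonal A. g i m) = (\<Sum>i\<in>A. \<Sum>m\<in>A. g i m) - (\<Sum>i\<in>A. g i i)"
proof -
  have "off_diagonal A = (SIGMA i:A. A - {i})"
    unfolding off_diagonal_def by auto
  then have "(\<Sum>(i, m)\<in>off_diagonal A. g i m) = (\<Sum>i\<in>A. \<Sum>m\<in>A - {i}. g i m)"
    using assms by (simp add: sum.Sigma)
  also have "\<dots> = (\<Sum>i\<in>A. (\<Sum>m\<in>A. g i m) - g i i)"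
    using assms by (intro sum.cong refl) (simp add: sum_diff1)
  finally show ?thesis
    by (simp add: sum_subtractf)
qed

lemma sum_permutations_apply_pair_indep:
  assumes "(j, l) \<in> off_diagonal A" "(j', l') \<in> off_diagonal A"
  shows "(\<Sum>\<pi> | \<pi> permutes A. h (\<pi> j') (\<pi> l')) = (\<Sum>\<pi> | \<pi> permutes A. h (\<pi> j) (\<pi> l))"
proof -
  define \<sigma> where "\<sigma> = transpose j j' \<circ> transpose l' (transpose j j' l)"
  have "\<sigma> permutes A"
    using assms unfolding \<sigma>_def off_diagonal_def
    by (intro permutes_compose permutes_swap_id) (auto simp: transpose_def)
  moreover have "\<sigma> j' = j" "\<sigma> l' = l"
    using assms unfolding \<sigma>_def off_diagonal_def by (auto simp: transpose_def)
  ultimately show ?thesis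
    using sum_permutations_compose_right[of \<sigma> A "\<lambda>\<pi>. h (\<pi> j') (\<pi> l')"] by simp
qed

lemma sum_permutations_apply_pair:
  fixes h :: "'a \<Rightarrow> 'a \<Rightarrow> 'b::comm_ring_1"
  assumes "finite A" "(j, l) \<in> off_diagonal A"
  shows "of_nat (card (off_diagonal A)) * (\<Sum>\<pi> | \<pi> permutes A. h (\<pi> j) (\<pi> l))
       = of_nat (card {\<pi>. \<pi> permutes A}) * (\<Sum>(i, m)\<in>off_diagonal A. h i m)"
proof -
  define P where "P = {\<pi>. \<pi> permutes A}"
  have "of_nat (card (off_diagonal A)) * (\<Sum>\<pi>\<in>P. h (\<pi> j) (\<pi> l))
      = (\<Sum>(j', l')\<in>off_diagonal A. \<Sum>\<pi>\<in>P. h (\<pi> j) (\<pi> l))"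
    by simp
  also have "\<dots> = (\<Sum>(j', l')\<in>off_diagonal A. \<Sum>\<pi>\<in>P. h (\<pi> j') (\<pi> l'))"
    unfolding P_def
    by (intro sum.cong refl) (clarsimp simp: sum_permutations_apply_pair_indep[OF assms(2)])
  also have "\<dots> = (\<Sum>\<pi>\<in>P. \<Sum>(j', l')\<in>off_diagonal A. h (\<pi> j') (\<pi> l'))"
    unfolding case_prod_beta by (rule sum.swap)
  also have "\<dots> = (\<Sum>\<pi>\<in>P. \<Sum>(i, m)\<in>off_diagonal A. h i m)"
  proof (rule sum.cong[OF refl])
    fix \<pi> assume "\<pi> \<in> P"
    then have reindex: "(\<Sum>i\<in>A. g (\<pi> i)) = sum g A" for g :: "'a \<Rightarrow> 'b"
      unfolding P_def using sum.permute[of \<pi> A g] by (simp add: comp_def)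
    show "(\<Sum>(j', l')\<in>off_diagonal A. h (\<pi> j') (\<pi> l')) = (\<Sum>(i, m)\<in>off_diagonal A. h i m)"
      using assms(1) reindex[of "\<lambda>i. sum (h i) A"] reindex[of "\<lambda>i. h i i"]
      by (simp add: sum_off_diagonal reindex)
  qed
  finally show ?thesis
    unfolding P_def by simp
qed

definition col_inner :: "nat \<Rightarrow> (nat \<Rightarrow> nat \<Rightarrow> complex) \<Rightarrow> nat \<Rightarrow> nat \<Rightarrow> complex" where
  "col_inner N Phi i m = (\<Sum>x=1..N. Phi x i * cnj (Phi x m))"

lemma StRIP_able_col_inner_self:
  assumes "StRIP_able N C Phi \<eta>" "i \<in> {1..C}"
  shows "col_inner N Phi i i = of_nat N"
proof -
  have "Phi x i * cnj (Phi x i) = 1" if "x \<in> {1..N}" for x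
    using StRIP_able_norm_entry[OF assms(1) that assms(2)] by (simp flip: complex_norm_square)
  then show ?thesis
    unfolding col_inner_def by simp
qed

lemma sum_col_inner_eq_0:
  assumes "\<forall>x\<in>{1..N}. (\<Sum>j=1..C. Phi x j) = 0"
  shows "(\<Sum>i=1..C. \<Sum>m=1..C. col_inner N Phi i m) = 0"
proof -
  have "(\<Sum>i=1..C. \<Sum>m=1..C. col_inner N Phi i m)
      = (\<Sum>x=1..N. (\<Sum>i=1..C. Phi x i) * cnj (\<Sum>m=1..C. Phi x m))"
    unfolding col_inner_def sum_product cnj_sum
    by (subst sum.swap, rule sum.cong[OF refl], rule sum.swap)
  also have "\<dots> = 0"
    using assms by simp
  finally show ?thesis .
qed

lemma StRIP_able_sum_permutations_col_inner:
  assumes "StRIP_able N C Phi \<eta>" "C \<ge> 2" "j \<in> {1..C}" "l \<in> {1..C}"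
  shows "(\<Sum>\<pi> | \<pi> permutes {1..C}. col_inner N Phi (\<pi> j) (\<pi> l))
       = (if j = l then of_nat (fact C * N) else - of_nat (fact C * N) / (of_nat C - 1))"
  (is "?X = _")
proof (cases "j = l")
  case True
  have "col_inner N Phi (\<pi> j) (\<pi> j) = of_nat N" if "\<pi> permutes {1..C}" for \<pi>
    using StRIP_able_col_inner_self[OF assms(1)] permutes_in_image[OF that] assms(3) by simp
  then show ?thesis
    using True by (simp add: card_permutations)
next
  case False
  have "\<forall>x\<in>{1..N}. (\<Sum>j=1..C. Phi x j) = 0"
    using assms(1) unfolding StRIP_able_def by blast
  then have "(\<Sum>i=1..C. \<Sum>m=1..C. col_inner N Phi i m) = 0"
    by (rule sum_col_inner_eq_0)
  then have "(\<Sum>(i, m)\<in>off_diagonal {1..C}. col_inner N Phi i m) = - (of_nat C * of_nat N)"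
    by (simp add: sum_off_diagonal StRIP_able_col_inner_self[OF assms(1)])
  moreover have "(j, l) \<in> off_diagonal {1..C}"
    using False assms(3,4) unfolding off_diagonal_def by simp
  ultimately have "of_nat C * ((of_nat C - 1) * ?X) = of_nat C * - of_nat (fact C * N)"
    using sum_permutations_apply_pair[of "{1..C}" j l "col_inner N Phi"] assms(2)
    by (simp add: card_off_diagonal card_permutations algebra_simps)
  moreover have "(of_nat C :: complex) \<noteq> 0"
    using assms(2) by simp
  ultimately have "(of_nat C - 1) * ?X = - of_nat (fact C * N)"
    by (rule mult_left_cancel[THEN iffD1, rotated])
  moreover have "(of_nat C - 1 :: complex) \<noteq> 0"
    using assms(2) of_nat_eq_iff[of C 1, where 'a = complex] by simp
  ultimately show ?thesis
    using False by (simp add: field_simps)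
qed

lemma alpha_vec_apply:
  assumes "inj \<pi>"
  shows "alpha_vec k a \<pi> (\<pi> j) = (if j \<in> {1..k} then a j else 0)"
  using assms unfolding alpha_vec_def by (auto simp: inj_eq intro!: arg_cong[where f = a])

lemma f_vec_eq:
  assumes "\<pi> permutes {1..C}" "k \<le> C"
  shows "f_vec N C Phi k a \<pi> x = complex_of_real (1 / sqrt (real N)) * (\<Sum>j=1..k. a j * Phi x (\<pi> j))"
proof -
  have "(\<Sum>i=1..C. Phi x i * alpha_vec k a \<pi> i) = (\<Sum>j=1..C. Phi x (\<pi> j) * alpha_vec k a \<pi> (\<pi> j))"
    using sum.permute[OF assms(1)] by (simp add: comp_def)
  also have "\<dots> = (\<Sum>j\<in>{1..C}. if j \<in> {1..k} then a j * Phi x (\<pi> j) else 0)"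
    using assms(1) by (intro sum.cong refl) (simp add: alpha_vec_apply permutes_inj)
  also have "\<dots> = (\<Sum>j\<in>{1..C} \<inter> {1..k}. a j * Phi x (\<pi> j))"
    by (rule sum.inter_restrict[symmetric]) simp
  also have "{1..C} \<inter> {1..k} = {1..k}"
    using assms(2) by auto
  finally show ?thesis
    unfolding f_vec_def by simp
qed

lemma sum_cmod_sum_squared:
  "complex_of_real (\<Sum>x\<in>X. (cmod (\<Sum>j\<in>J. a j * v x j))\<^sup>2)
     = (\<Sum>j\<in>J. \<Sum>l\<in>J. a j * cnj (a l) * (\<Sum>x\<in>X. v x j * cnj (v x l)))"
proof -
  have "complex_of_real (\<Sum>x\<in>X. (cmod (\<Sum>j\<in>J. a j * v x j))\<^sup>2)
      = (\<Sum>x\<in>X. \<Sum>j\<in>J. \<Sum>l\<in>J. a j * cnj (a l) * (v x j * cnj (v x l)))"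
    unfolding of_real_sum complex_norm_square by (simp add: sum_product cnj_sum mult_ac)
  also have "\<dots> = (\<Sum>j\<in>J. \<Sum>l\<in>J. \<Sum>x\<in>X. a j * cnj (a l) * (v x j * cnj (v x l)))"
    by (subst sum.swap, rule sum.cong[OF refl], rule sum.swap)
  finally show ?thesis
    by (simp add: sum_distrib_left)
qed

lemma sum_sum_mult_if_eq:
  fixes x y :: "'i \<Rightarrow> 'a::comm_ring_1"
  assumes "finite J"
  shows "(\<Sum>j\<in>J. \<Sum>l\<in>J. x j * y l * (if j = l then 1 else - c))
       = (1 + c) * (\<Sum>j\<in>J. x j * y j) - c * ((\<Sum>j\<in>J. x j) * (\<Sum>l\<in>J. y l))"
proof -
  have "(\<Sum>j\<in>J. \<Sum>l\<in>J. x j * y l * (if j = l then 1 else - c))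
      = (\<Sum>j\<in>J. \<Sum>l\<in>J. (if j = l then (1 + c) * (x j * y l) else 0) - c * (x j * y l))"
    by (intro sum.cong refl) (simp add: algebra_simps)
  also have "\<dots> = (\<Sum>j\<in>J. (1 + c) * (x j * y j)) - c * (\<Sum>j\<in>J. \<Sum>l\<in>J. x j * y l)"
    using assms by (simp add: sum_subtractf sum_distrib_left)
  also have "\<dots> = (1 + c) * (\<Sum>j\<in>J. x j * y j) - c * ((\<Sum>j\<in>J. x j) * (\<Sum>l\<in>J. y l))"
    unfolding sum_product by (simp add: sum_distrib_left)
  finally show ?thesis .
qed

lemma sqnorm_f_vec:
  assumes "\<pi> permutes {1..C}" "k \<le> C"
  shows "sqnorm N (f_vec N C Phi k a \<pi>) = (\<Sum>x=1..N. (cmod (\<Sum>j=1..k. a j * Phi x (\<pi> j)))\<^sup>2) / real N"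
  unfolding sqnorm_def f_vec_eq[OF assms] norm_mult norm_of_real power_mult_distrib
  by (simp add: sum_divide_distrib power_divide)

lemma StRIP_able_E_perm_sqnorm_f_vec:
  assumes "StRIP_able N C Phi \<eta>" "C \<ge> 2" "N > 0" "k \<le> C"
  shows "E_perm C (\<lambda>\<pi>. sqnorm N (f_vec N C Phi k a \<pi>))
       = (1 + 1 / (real C - 1)) * (\<Sum>j=1..k. (cmod (a j))\<^sup>2)
         - 1 / (real C - 1) * (cmod (\<Sum>j=1..k. a j))\<^sup>2"
    (is "_ = ?rhs")
proof -
  define P where "P = {\<pi>. \<pi> permutes {1..C}}"
  define c where "c = 1 / (complex_of_nat C - 1)"
  have "complex_of_real (\<Sum>\<pi>\<in>P. \<Sum>x=1..N. (cmod (\<Sum>j=1..k. a j * Phi x (\<pi> j)))\<^sup>2)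
      = (\<Sum>\<pi>\<in>P. \<Sum>j=1..k. \<Sum>l=1..k. a j * cnj (a l) * col_inner N Phi (\<pi> j) (\<pi> l))"
    unfolding col_inner_def by (subst of_real_sum) (simp only: sum_cmod_sum_squared)
  also have "\<dots> = (\<Sum>j=1..k. \<Sum>l=1..k. a j * cnj (a l) * (\<Sum>\<pi>\<in>P. col_inner N Phi (\<pi> j) (\<pi> l)))"
    unfolding sum_distrib_left by (subst sum.swap, rule sum.cong[OF refl], rule sum.swap)
  also have "\<dots> = (\<Sum>j=1..k. \<Sum>l=1..k. of_nat (fact C * N) * (a j * cnj (a l) * (if j = l then 1 else - c)))"
  proof (intro sum.cong refl)
    fix j l assume "j \<in> {1..k}" "l \<in> {1..k}"
    then have "(\<Sum>\<pi>\<in>P. col_inner N Phi (\<pi> j) (\<pi> l))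
        = (if j = l then of_nat (fact C * N) else - of_nat (fact C * N) / (of_nat C - 1))"
      unfolding P_def using assms(4)
      by (intro StRIP_able_sum_permutations_col_inner[OF assms(1,2)]) auto
    then show "a j * cnj (a l) * (\<Sum>\<pi>\<in>P. col_inner N Phi (\<pi> j) (\<pi> l))
        = of_nat (fact C * N) * (a j * cnj (a l) * (if j = l then 1 else - c))"
      by (simp add: c_def)
  qed
  also have "\<dots> = complex_of_real (real (fact C * N) * ?rhs)"
    unfolding sum_distrib_left[symmetric] sum_sum_mult_if_eq[OF finite_atLeastAtMost] c_def
    by (simp add: complex_norm_square cnj_sum of_real_sum del: of_real_power)
  finally have "(\<Sum>\<pi>\<in>P. \<Sum>x=1..N. (cmod (\<Sum>j=1..k. a j * Phi x (\<pi> j)))\<^sup>2) = real (fact C * N) * ?rhs"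
    by (simp only: of_real_eq_iff)
  then show ?thesis
    unfolding E_perm_def P_def[symmetric] using assms(3,4)
    by (simp add: P_def sqnorm_f_vec card_permutations flip: sum_divide_distrib)
qed

lemma norm_sum_squared_le:
  fixes a :: "'i \<Rightarrow> 'a::real_normed_vector"
  shows "(norm (sum a J))\<^sup>2 \<le> real (card J) * (\<Sum>j\<in>J. (norm (a j))\<^sup>2)"
proof -
  have "(norm (sum a J))\<^sup>2 \<le> (\<Sum>j\<in>J. norm (a j))\<^sup>2"
    by (intro power_mono norm_sum) simp
  also have "\<dots> \<le> real (card J) * (\<Sum>j\<in>J. (norm (a j))\<^sup>2)"
    using sum_squared_le_sum_of_squares[of "\<lambda>j. norm (a j)" J] by (simp add: mult.commute)
  finally show ?thesis .
qed

theorem lemma3p2: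
  fixes N C k :: nat and Phi :: "nat \<Rightarrow> nat \<Rightarrow> complex" and \<eta> :: real
    and a :: "nat \<Rightarrow> complex"
  assumes "C \<ge> 2"
    and "no_repeated_columns N C Phi"
    and "StRIP_able N C Phi \<eta>"
    and "1 \<le> k" and "k \<le> C"
  shows "(1 - (real k - 1) / (real C - 1)) * (\<Sum>j=1..k. (cmod (a j))\<^sup>2)
        \<le> E_perm C (\<lambda>\<pi>. sqnorm N (f_vec N C Phi k a \<pi>))
    \<and> E_perm C (\<lambda>\<pi>. sqnorm N (f_vec N C Phi k a \<pi>))
        \<le> (1 + 1 / (real C - 1)) * (\<Sum>j=1..k. (cmod (a j))\<^sup>2)"
proof -
  define S where "S = (\<Sum>j=1..k. (cmod (a j))\<^sup>2)"
  define c where "c = 1 / (real C - 1)"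
  \<comment> \<open>distinctness of the columns is needed only to exclude N = 0\<close>
  have "\<exists>x\<in>{1..N}. Phi x 1 \<noteq> Phi x 2"
    using assms(1,2) unfolding no_repeated_columns_def by auto
  then have "N > 0"
    by auto
  then have E: "E_perm C (\<lambda>\<pi>. sqnorm N (f_vec N C Phi k a \<pi>)) = (1 + c) * S - c * (cmod (\<Sum>j=1..k. a j))\<^sup>2"
    unfolding S_def c_def using StRIP_able_E_perm_sqnorm_f_vec[OF assms(3,1) _ assms(5)] by simp
  have "c \<ge> 0"
    unfolding c_def using assms(1) by simp
  moreover have "(cmod (\<Sum>j=1..k. a j))\<^sup>2 \<le> real k * S"
    unfolding S_def using norm_sum_squared_le[of a "{1..k}"] by simp
  ultimately have "c * (cmod (\<Sum>j=1..k. a j))\<^sup>2 \<le> c * (real k * S)"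
    by (rule mult_left_mono[rotated])
  moreover have "(1 - (real k - 1) / (real C - 1)) * S = (1 + c) * S - c * (real k * S)"
    unfolding c_def by (simp add: algebra_simps diff_divide_distrib)
  ultimately show ?thesis
    using E \<open>c \<ge> 0\<close> unfolding S_def c_def by (simp add: mult_nonneg_nonneg)
qed

end
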